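(* Let $\mathbb{H}$ be a real Hilbert space, let $\mathbf{x}$ be a random vector in $\mathbb{H}$ with $\mathbb{E}[\|\mathbf{x}\|^2]<\infty$, and let $\mathcal{S}$ be the operator $\mathcal{S}\boldsymbol{\theta}=\mathbb{E}[\langle\boldsymbol{\theta},\mathbf{x}\rangle\mathbf{x}]$. Assume $\mathcal{S}$ has an orthonormal basis $(\mathbf{e}_i)$ of eigenvectors with eigenvalues $\lambda_i$ satisfying $0<\lambda_i<\tfrac12$ for all $i$. Let $\gamma\in(0,1)$ and $\mathcal{T}=\mathrm{Id}-\gamma\mathcal{S}$. Let $\boldsymbol{\theta}\in\mathbb{H}$, $\beta\in\mathbb{R}$, and let $(t_n)_{n\ge1}$ be a sequence of positive numbers with $\sum_{n\ge1}\frac{1}{n t_n}<\infty$. If $\|\mathcal{T}^n\boldsymbol{\theta}\|^2\le \frac{1}{n^\beta t_n}$ for every $n\ge1$, then $\|\boldsymbol{\theta}\|_\beta^2<\infty$.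
   Context: For $\boldsymbol{\theta}=\sum_i\theta_i\mathbf{e}_i$ and $\beta\in\mathbb{R}$, $\|\boldsymbol{\theta}\|_\beta^2:=\langle\boldsymbol{\theta},\mathcal{S}^{-\beta}\boldsymbol{\theta}\rangle=\sum_i\lambda_i^{-\beta}\theta_i^2\in[0,\infty]$, where $\mathcal{S}^{\kappa}\boldsymbol{\theta}=\sum_i\lambda_i^{\kappa}\theta_i\mathbf{e}_i$. Note $\mathcal{T}^n\boldsymbol{\theta}$ equals the expectation $\mathbb{E}[\boldsymbol{\theta}(n)]$ of the random iteration $\boldsymbol{\theta}(0)=\boldsymbol{\theta}$, $\boldsymbol{\theta}(k+1)=\boldsymbol{\theta}(k)-\gamma\langle\boldsymbol{\theta}(k),\mathbf{x}(k)\rangle\mathbf{x}(k)$ with $\mathbf{x}(k)$ i.i.d. copies of $\mathbf{x}$. *)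

theory Defs
  imports "HOL-Probability.Probability"
begin

definition second_moment_op ::
  "'s measure \<Rightarrow> ('s \<Rightarrow> 'a::{real_inner, banach, second_countable_topology}) \<Rightarrow> 'a \<Rightarrow> 'a" where
  "second_moment_op M X v = (\<integral>\<omega>. inner v (X \<omega>) *\<^sub>R X \<omega> \<partial>M)"

definition orthonormal_basis :: "'a::real_inner set \<Rightarrow> bool" where
  "orthonormal_basis E \<longleftrightarrow> pairwise orthogonal E \<and> (\<forall>e\<in>E. norm e = 1) \<and> closure (span E) = UNIV"

definition beta_norm_sq :: "'a::real_inner set \<Rightarrow> ('a \<Rightarrow> real) \<Rightarrow> real \<Rightarrow> 'a \<Rightarrow> ennreal" where
  "beta_norm_sq E lam \<beta> \<theta> = (\<Sum>\<^sub>\<infinity>e\<in>E. ennreal (lam e powr (-\<beta>) * (inner \<theta> e)\<^sup>2))"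

end

(* Along an eigenvector e the iterates contract exactly, <T^n theta, e> = (1 - gamma lambda_e)^n <theta, e>,
   so Bessel's inequality and the hypothesis give
     sum_e n^(beta-1) (1 - gamma lambda_e)^(2n) <theta, e>^2 <= n^(beta-1) ||T^n theta||^2 <= 1 / (n t_n),
   which is summable in n.  Summing over n first, the inner series sum_n n^(beta-1) (1 - x)^(2n) is
   bounded below by a constant times x^(-beta) for 0 < x <= 1/2, which produces the weights lambda_e^(-beta).
   For beta <= 0 the claim is Bessel's inequality, since lambda_e < 1. *)
theory Submission
  imports Defs
begin

lemma bessel_inequality_finite:
  fixes v :: "'a::real_inner"
  assumes "pairwise orthogonal E" "\<And>e. e \<in> E \<Longrightarrow> norm e = 1" "finite F" "F \<subseteq> E"
  shows "(\<Sum>e\<in>F. (inner v e)\<^sup>2) \<le> (norm v)\<^sup>2"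
proof -
  define w where "w = (\<Sum>e\<in>F. inner v e *\<^sub>R e)"
  have orthonormal: "inner e e' = (if e = e' then 1 else 0)" if "e \<in> F" "e' \<in> F" for e e'
    using assms that unfolding pairwise_def orthogonal_def
    by (auto simp: dot_square_norm subsetD)
  have vw: "inner v w = (\<Sum>e\<in>F. (inner v e)\<^sup>2)"
    unfolding w_def by (simp add: inner_sum_right power2_eq_square)
  have "inner w w = (\<Sum>e\<in>F. \<Sum>e'\<in>F. inner v e * inner v e' * inner e' e)"
    unfolding w_def by (simp add: inner_sum_left inner_sum_right sum_distrib_left mult.assoc)
  also have "\<dots> = (\<Sum>e\<in>F. \<Sum>e'\<in>F. if e = e' then inner v e * inner v e' else 0)"
    by (intro sum.cong refl) (simp add: orthonormal)
  also have "\<dots> = (\<Sum>e\<in>F. (inner v e)\<^sup>2)"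
    using assms(3) by (simp add: power2_eq_square)
  finally have ww: "inner w w = (\<Sum>e\<in>F. (inner v e)\<^sup>2)" .
  have "0 \<le> inner (v - w) (v - w)" by simp
  also have "\<dots> = inner v v - 2 * inner v w + inner w w"
    by (simp add: inner_diff_left inner_diff_right inner_commute)
  finally show ?thesis using vw ww by (simp add: dot_square_norm[symmetric])
qed

lemma integrable_second_moment_integrand:
  fixes X :: "'s \<Rightarrow> 'a::{real_inner, banach, second_countable_topology}"
  assumes "X \<in> borel_measurable M" "integrable M (\<lambda>\<omega>. (norm (X \<omega>))\<^sup>2)"
  shows "integrable M (\<lambda>\<omega>. inner v (X \<omega>) *\<^sub>R X \<omega>)"
proof (rule Bochner_Integration.integrable_bound)
  show "integrable M (\<lambda>\<omega>. norm v * (norm (X \<omega>))\<^sup>2)" using assms(2) by simp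
  show "(\<lambda>\<omega>. inner v (X \<omega>) *\<^sub>R X \<omega>) \<in> borel_measurable M" using assms(1) by measurable
  have "norm (inner v (X \<omega>) *\<^sub>R X \<omega>) \<le> norm v * (norm (X \<omega>))\<^sup>2" for \<omega>
    using mult_right_mono[OF Cauchy_Schwarz_ineq2[of v "X \<omega>"] norm_ge_zero[of "X \<omega>"]]
    by (simp add: power2_eq_square mult.assoc)
  then show "AE \<omega> in M. norm (inner v (X \<omega>) *\<^sub>R X \<omega>) \<le> norm (norm v * (norm (X \<omega>))\<^sup>2)"
    by simp
qed

lemma second_moment_op_symmetric:
  fixes X :: "'s \<Rightarrow> 'a::{real_inner, banach, second_countable_topology}"
  assumes "X \<in> borel_measurable M" "integrable M (\<lambda>\<omega>. (norm (X \<omega>))\<^sup>2)"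
  shows "inner (second_moment_op M X v) w = inner v (second_moment_op M X w)"
proof -
  have "inner (second_moment_op M X v) w = (\<integral>\<omega>. inner v (X \<omega>) * inner (X \<omega>) w \<partial>M)"
    unfolding second_moment_op_def
    by (subst integral_inner_left[symmetric])
       (auto intro: integrable_second_moment_integrand[OF assms])
  also have "\<dots> = inner v (second_moment_op M X w)"
    unfolding second_moment_op_def
    by (subst integral_inner_right[symmetric])
       (auto intro: integrable_second_moment_integrand[OF assms] simp: inner_commute mult.commute)
  finally show ?thesis .
qed

lemma inner_funpow_eigen:
  assumes "\<And>v. inner (f v) e = c * inner v e"
  shows "inner ((f ^^ n) v) e = c ^ n * inner v e"
  by (induction n) (simp_all add: assms)

lemma one_minus_power_ge_eighth:
  fixes x :: real
  assumes "0 < x" "x \<le> 1/2" "1 \<le> n" "real (n - 1) * x \<le> 1/4"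
  shows "1/8 \<le> (1 - x) ^ (2 * n)"
proof -
  have "1 + real (2 * (n - 1)) * (- x) \<le> (1 + (- x)) ^ (2 * (n - 1))"
    by (rule Bernoulli_inequality) (use assms in auto)
  then have tail: "1/2 \<le> (1 - x) ^ (2 * (n - 1))" using assms(4) by simp
  have head: "1/4 \<le> (1 - x)\<^sup>2"
    using power_mono[of "1/2" "1 - x" 2] assms(2) by (simp add: power2_eq_square)
  have "2 * n = 2 + 2 * (n - 1)" using assms(3) by simp
  then have "(1 - x) ^ (2 * n) = (1 - x)\<^sup>2 * (1 - x) ^ (2 * (n - 1))"
    by (metis power_add)
  with mult_mono[OF head tail] show ?thesis by simp
qed

lemma sum_powr_block_ge:
  fixes \<beta> :: real
  assumes "1 \<le> K"
  shows "min 1 (2 powr (\<beta> - 1)) * real K powr \<beta> \<le> (\<Sum>n\<in>{K..<2*K}. real n powr (\<beta> - 1))"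
proof -
  define c where "c = min 1 (2 powr (\<beta> - 1))"
  have term_ge: "c * real K powr (\<beta> - 1) \<le> real n powr (\<beta> - 1)" if "n \<in> {K..<2*K}" for n
  proof (cases "1 \<le> \<beta>")
    case True
    then have "real K powr (\<beta> - 1) \<le> real n powr (\<beta> - 1)"
      using that assms by (intro powr_mono2) auto
    moreover have "c * real K powr (\<beta> - 1) \<le> real K powr (\<beta> - 1)"
      unfolding c_def by (intro mult_left_le_one_le) auto
    ultimately show ?thesis by linarith
  next
    case False
    then have "real (2 * K) powr (\<beta> - 1) \<le> real n powr (\<beta> - 1)"
      using that assms by (intro powr_mono2') auto
    moreover have "c * real K powr (\<beta> - 1) \<le> 2 powr (\<beta> - 1) * real K powr (\<beta> - 1)"
      unfolding c_def by (intro mult_right_mono) auto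
    ultimately show ?thesis by (simp add: powr_mult)
  qed
  have "c * real K powr \<beta> = (\<Sum>n\<in>{K..<2*K}. c * real K powr (\<beta> - 1))"
    using assms by (simp add: powr_diff)
  also have "\<dots> \<le> (\<Sum>n\<in>{K..<2*K}. real n powr (\<beta> - 1))"
    by (rule sum_mono) (rule term_ge)
  finally show ?thesis unfolding c_def .
qed

lemma powr_neg_le_block_sum:
  fixes \<beta> x :: real
  assumes "0 < \<beta>" "0 < x" "x \<le> 1/2"
  defines "K \<equiv> nat \<lfloor>1 / (8 * x)\<rfloor> + 1"
  shows "x powr (-\<beta>) \<le> 8 powr \<beta> * 8 / min 1 (2 powr (\<beta> - 1))
           * (\<Sum>n\<in>{K..<2*K}. real n powr (\<beta> - 1) * (1 - x) ^ (2 * n))"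
proof -
  \<comment> \<open>On the block \<open>K \<le> n < 2K\<close> the factor \<open>(1 - x)^(2n)\<close> stays above \<open>1/8\<close>,
    while the weights add up to order \<open>K^\<beta> \<approx> x^(-\<beta>)\<close>.\<close>
  define c where "c = min 1 (2 powr (\<beta> - 1))"
  have c: "0 < c" unfolding c_def by simp
  have floor: "real (K - 1) \<le> 1 / (8 * x)" "1 / (8 * x) \<le> real K"
    unfolding K_def using assms(2) by (simp_all add: of_nat_nat) linarith
  have "real (K - 1) * x \<le> 1/8"
    using mult_right_mono[OF floor(1), of x] assms(2) by simp
  then have K: "1 \<le> K" "2 * real (K - 1) * x \<le> 1/4"
    by (auto simp: K_def)
  have weight_le: "real n powr (\<beta> - 1) \<le> 8 * (real n powr (\<beta> - 1) * (1 - x) ^ (2 * n))"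
    if "n \<in> {K..<2*K}" for n
  proof -
    have "real (n - 1) * x \<le> 2 * real (K - 1) * x"
      using that assms(2) by (intro mult_right_mono) auto
    with K(2) have "real (n - 1) * x \<le> 1/4" by linarith
    then have "1/8 \<le> (1 - x) ^ (2 * n)"
      using that K(1) assms(2,3) by (intro one_minus_power_ge_eighth) auto
    then have "real n powr (\<beta> - 1) * (1/8) \<le> real n powr (\<beta> - 1) * (1 - x) ^ (2 * n)"
      by (rule mult_left_mono) simp
    then show ?thesis by linarith
  qed
  have "x powr (-\<beta>) = 8 powr \<beta> * (1 / (8 * x)) powr \<beta>"
    using assms(2) by (simp add: powr_divide powr_mult powr_minus_divide)
  also have "\<dots> \<le> 8 powr \<beta> * real K powr \<beta>"
    using floor(2) assms(1,2) by (intro mult_left_mono powr_mono2) auto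
  also have "\<dots> \<le> 8 powr \<beta> / c * (\<Sum>n\<in>{K..<2*K}. real n powr (\<beta> - 1))"
    using sum_powr_block_ge[OF K(1), of \<beta>] c by (simp add: c_def field_simps)
  also have "\<dots> \<le> 8 powr \<beta> / c * (8 * (\<Sum>n\<in>{K..<2*K}. real n powr (\<beta> - 1) * (1 - x) ^ (2 * n)))"
    using c weight_le by (intro mult_left_mono) (auto simp: sum_distrib_left intro: sum_mono)
  finally show ?thesis by (simp add: c_def)
qed

lemma powr_neg_le_weighted_geometric_sum:
  fixes \<beta> :: real
  assumes "0 < \<beta>"
  obtains C where "0 \<le> C"
    and "\<And>x. 0 < x \<Longrightarrow> x \<le> 1/2 \<Longrightarrow>
           eventually (\<lambda>N. x powr (-\<beta>) \<le> C * (\<Sum>n<N. real n powr (\<beta> - 1) * (1 - x) ^ (2 * n)))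
             sequentially"
proof
  define C where "C = 8 powr \<beta> * 8 / min 1 (2 powr (\<beta> - 1))"
  show "0 \<le> C" unfolding C_def by simp
  fix x :: real
  assume x: "0 < x" "x \<le> 1/2"
  define K where "K = nat \<lfloor>1 / (8 * x)\<rfloor> + 1"
  show "eventually (\<lambda>N. x powr (-\<beta>) \<le> C * (\<Sum>n<N. real n powr (\<beta> - 1) * (1 - x) ^ (2 * n)))
          sequentially"
    using eventually_ge_at_top[of "2 * K"]
  proof eventually_elim
    case (elim N)
    have "(\<Sum>n\<in>{K..<2*K}. real n powr (\<beta> - 1) * (1 - x) ^ (2 * n))
        \<le> (\<Sum>n<N. real n powr (\<beta> - 1) * (1 - x) ^ (2 * n))"
      using elim x by (intro sum_mono2) auto
    then show ?case
      using powr_neg_le_block_sum[OF assms x] \<open>0 \<le> C\<close> mult_left_mono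
      unfolding C_def K_def by (meson order_trans)
  qed
qed

lemma weighted_coefficient_sum_le_norm:
  fixes E :: "'a::real_inner set" and \<theta> :: 'a
  assumes "pairwise orthogonal E" "\<And>e. e \<in> E \<Longrightarrow> norm e = 1"
    and "\<beta> \<le> 0" and "\<And>e. e \<in> E \<Longrightarrow> 0 < lam e \<and> lam e \<le> 1"
    and "finite F" "F \<subseteq> E"
  shows "(\<Sum>e\<in>F. lam e powr (-\<beta>) * (inner \<theta> e)\<^sup>2) \<le> (norm \<theta>)\<^sup>2"
proof -
  have "lam e powr (-\<beta>) \<le> 1" if "e \<in> F" for e
  proof -
    have "0 < lam e" "lam e \<le> 1" using assms(4,6) that by auto
    then show ?thesis using powr_mono2[of "-\<beta>" "lam e" 1] assms(3) by simp
  qed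
  then have "(\<Sum>e\<in>F. lam e powr (-\<beta>) * (inner \<theta> e)\<^sup>2) \<le> (\<Sum>e\<in>F. (inner \<theta> e)\<^sup>2)"
    by (intro sum_mono mult_left_le_one_le) auto
  also have "\<dots> \<le> (norm \<theta>)\<^sup>2"
    by (rule bessel_inequality_finite[OF assms(1,2,5,6)])
  finally show ?thesis .
qed

lemma weighted_bessel_interchange:
  fixes E :: "'a::real_inner set" and v :: "nat \<Rightarrow> 'a" and \<theta> :: 'a and x :: "'a \<Rightarrow> real"
  assumes orth: "pairwise orthogonal E" "\<And>e. e \<in> E \<Longrightarrow> norm e = 1"
    and F: "finite F" "F \<subseteq> E"
    and coeff: "\<And>n e. e \<in> E \<Longrightarrow> inner (v n) e = (1 - x e) ^ n * inner \<theta> e"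
    and "\<And>n. 0 \<le> w n"
  shows "(\<Sum>e\<in>F. (\<Sum>n<N. w n * (1 - x e) ^ (2 * n)) * (inner \<theta> e)\<^sup>2)
           \<le> (\<Sum>n<N. w n * (norm (v n))\<^sup>2)"
proof -
  have square: "(1 - x e) ^ (2 * n) * (inner \<theta> e)\<^sup>2 = (inner (v n) e)\<^sup>2" if "e \<in> E" for n e
    by (simp add: coeff[OF that, of n] power_mult_distrib power_even_eq)
  have "(\<Sum>e\<in>F. (\<Sum>n<N. w n * (1 - x e) ^ (2 * n)) * (inner \<theta> e)\<^sup>2)
      = (\<Sum>e\<in>F. \<Sum>n<N. w n * ((1 - x e) ^ (2 * n) * (inner \<theta> e)\<^sup>2))"
    by (simp add: sum_distrib_right mult.assoc)
  also have "\<dots> = (\<Sum>n<N. w n * (\<Sum>e\<in>F. (inner (v n) e)\<^sup>2))"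
    using F(2) by (subst sum.swap) (simp add: sum_distrib_left square subsetD)
  also have "\<dots> \<le> (\<Sum>n<N. w n * (norm (v n))\<^sup>2)"
    using bessel_inequality_finite[OF orth F] assms(6) by (intro sum_mono mult_left_mono) auto
  finally show ?thesis .
qed

lemma weighted_coefficient_sum_bounded:
  fixes E :: "'a::real_inner set" and v :: "nat \<Rightarrow> 'a" and \<theta> :: 'a and lam :: "'a \<Rightarrow> real"
  assumes orth: "pairwise orthogonal E" "\<And>e. e \<in> E \<Longrightarrow> norm e = 1"
    and "0 < \<beta>" "0 < \<gamma>"
    and rate: "\<And>e. e \<in> E \<Longrightarrow> 0 < lam e \<and> \<gamma> * lam e \<le> 1/2"
    and coeff: "\<And>n e. e \<in> E \<Longrightarrow> inner (v n) e = (1 - \<gamma> * lam e) ^ n * inner \<theta> e"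
    and summable: "summable (\<lambda>n. real n powr (\<beta> - 1) * (norm (v n))\<^sup>2)"
  obtains C where
    "\<And>F. finite F \<Longrightarrow> F \<subseteq> E \<Longrightarrow> (\<Sum>e\<in>F. lam e powr (-\<beta>) * (inner \<theta> e)\<^sup>2) \<le> C"
proof -
  define S where "S y N = (\<Sum>n<N. real n powr (\<beta> - 1) * (1 - y) ^ (2 * n))" for y N
  obtain C0 where C0: "0 \<le> C0"
    and lower: "\<And>y. 0 < y \<Longrightarrow> y \<le> 1/2 \<Longrightarrow> eventually (\<lambda>N. y powr (-\<beta>) \<le> C0 * S y N) sequentially"
    unfolding S_def using powr_neg_le_weighted_geometric_sum[OF \<open>0 < \<beta>\<close>] by blast
  define C1 where "C1 = \<gamma> powr \<beta> * C0"
  have C1: "0 \<le> C1" unfolding C1_def using C0 by simp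
  have lower_lam: "eventually (\<lambda>N. lam e powr (-\<beta>) \<le> C1 * S (\<gamma> * lam e) N) sequentially"
    if "e \<in> E" for e
  proof -
    have rescale: "lam e powr (-\<beta>) = \<gamma> powr \<beta> * (\<gamma> * lam e) powr (-\<beta>)"
      using rate[OF that] \<open>0 < \<gamma>\<close> by (simp add: powr_mult powr_minus field_simps)
    have "eventually (\<lambda>N. (\<gamma> * lam e) powr (-\<beta>) \<le> C0 * S (\<gamma> * lam e) N) sequentially"
      using rate[OF that] \<open>0 < \<gamma>\<close> by (intro lower) auto
    then show ?thesis
      by (rule eventually_mono) (simp add: rescale C1_def mult.assoc mult_left_mono)
  qed
  show thesis
  proof (rule that[of "C1 * (\<Sum>n. real n powr (\<beta> - 1) * (norm (v n))\<^sup>2)"])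
    fix F assume F: "finite F" "F \<subseteq> E"
    have "eventually (\<lambda>N. \<forall>e\<in>F. lam e powr (-\<beta>) \<le> C1 * S (\<gamma> * lam e) N) sequentially"
      using F by (intro eventually_ball_finite ballI lower_lam) auto
    then obtain N where N: "\<And>e. e \<in> F \<Longrightarrow> lam e powr (-\<beta>) \<le> C1 * S (\<gamma> * lam e) N"
      by (auto simp: eventually_sequentially)
    have "(\<Sum>e\<in>F. lam e powr (-\<beta>) * (inner \<theta> e)\<^sup>2)
        \<le> C1 * (\<Sum>e\<in>F. S (\<gamma> * lam e) N * (inner \<theta> e)\<^sup>2)"
      unfolding sum_distrib_left mult.assoc[symmetric] by (intro sum_mono mult_right_mono N) auto
    also have "\<dots> \<le> C1 * (\<Sum>n<N. real n powr (\<beta> - 1) * (norm (v n))\<^sup>2)"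
      unfolding S_def using weighted_bessel_interchange[OF orth F coeff] C1
      by (intro mult_left_mono) auto
    also have "\<dots> \<le> C1 * (\<Sum>n. real n powr (\<beta> - 1) * (norm (v n))\<^sup>2)"
      using summable C1 by (intro mult_left_mono sum_le_suminf) auto
    finally show "(\<Sum>e\<in>F. lam e powr (-\<beta>) * (inner \<theta> e)\<^sup>2)
        \<le> C1 * (\<Sum>n. real n powr (\<beta> - 1) * (norm (v n))\<^sup>2)" .
  qed
qed

lemma summable_powr_weighted_of_decay:
  fixes a t :: "nat \<Rightarrow> real"
  assumes "\<And>n. 1 \<le> n \<Longrightarrow> 0 < t n"
    and "summable (\<lambda>n. 1 / (real (Suc n) * t (Suc n)))"
    and "\<And>n. 0 \<le> a n"
    and "\<And>n. 1 \<le> n \<Longrightarrow> a n \<le> 1 / (real n powr \<beta> * t n)"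
  shows "summable (\<lambda>n. real n powr (\<beta> - 1) * a n)"
proof (rule summable_comparison_test')
  show "summable (\<lambda>n. 1 / (real n * t n))"
    using assms(2) summable_Suc_iff by blast
  fix n :: nat assume "1 \<le> n"
  have "real n powr (\<beta> - 1) * a n \<le> real n powr (\<beta> - 1) * (1 / (real n powr \<beta> * t n))"
    using assms(4)[OF \<open>1 \<le> n\<close>] by (rule mult_left_mono) simp
  also have "\<dots> = 1 / (real n * t n)"
    using \<open>1 \<le> n\<close> assms(1)[OF \<open>1 \<le> n\<close>] by (simp add: powr_diff field_simps)
  finally show "norm (real n powr (\<beta> - 1) * a n) \<le> 1 / (real n * t n)"
    using assms(3) by simp
qed

lemma infsum_ennreal_less_top_if_bounded:
  fixes f :: "'a \<Rightarrow> real"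
  assumes "\<And>x. x \<in> A \<Longrightarrow> 0 \<le> f x"
    and "\<And>F. finite F \<Longrightarrow> F \<subseteq> A \<Longrightarrow> (\<Sum>x\<in>F. f x) \<le> C"
  shows "(\<Sum>\<^sub>\<infinity>x\<in>A. ennreal (f x)) < \<infinity>"
proof -
  have "(\<Sum>\<^sub>\<infinity>x\<in>A. ennreal (f x)) \<le> ennreal C"
  proof (rule infsum_le_finite_sums)
    fix F assume F: "finite F" "F \<subseteq> A"
    then have "(\<Sum>x\<in>F. ennreal (f x)) = ennreal (\<Sum>x\<in>F. f x)"
      using assms(1) by (intro sum_ennreal) auto
    also have "\<dots> \<le> ennreal C" using assms(2)[OF F] by (rule ennreal_leI)
    finally show "(\<Sum>x\<in>F. ennreal (f x)) \<le> ennreal C" .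
  qed (simp add: nonneg_summable_on_complete)
  also have "\<dots> < \<infinity>" by simp
  finally show ?thesis .
qed

theorem theorem2:
  fixes M :: "'s measure"
    and X :: "'s \<Rightarrow> 'a::{real_inner, banach, second_countable_topology}"
    and E :: "'a set" and lam :: "'a \<Rightarrow> real"
    and \<gamma> \<beta> :: real and \<theta> :: 'a and t :: "nat \<Rightarrow> real"
  assumes "prob_space M"
    and "X \<in> borel_measurable M"
    and "integrable M (\<lambda>\<omega>. (norm (X \<omega>))\<^sup>2)"
    and "orthonormal_basis E"
    and "\<And>e. e \<in> E \<Longrightarrow> second_moment_op M X e = lam e *\<^sub>R e"
    and "\<And>e. e \<in> E \<Longrightarrow> 0 < lam e \<and> lam e < 1/2"
    and "0 < \<gamma>" and "\<gamma> < 1"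
    and "\<And>n. n \<ge> 1 \<Longrightarrow> t n > 0"
    and "summable (\<lambda>n. 1 / (real (Suc n) * t (Suc n)))"
    and "\<And>n. n \<ge> 1 \<Longrightarrow>
           (norm (((\<lambda>v. v - \<gamma> *\<^sub>R second_moment_op M X v) ^^ n) \<theta>))\<^sup>2
             \<le> 1 / (real n powr \<beta> * t n)"
  shows "beta_norm_sq E lam \<beta> \<theta> < \<infinity>"
proof -
  define T where "T = (\<lambda>v. v - \<gamma> *\<^sub>R second_moment_op M X v)"
  have orth: "pairwise orthogonal E" "\<And>e. e \<in> E \<Longrightarrow> norm e = 1"
    using assms(4) by (auto simp: orthonormal_basis_def)
  have coeff: "inner ((T ^^ n) \<theta>) e = (1 - \<gamma> * lam e) ^ n * inner \<theta> e" if "e \<in> E" for n e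
    by (rule inner_funpow_eigen) (simp add: T_def inner_diff_left algebra_simps
        second_moment_op_symmetric[OF assms(2,3)] assms(5)[OF that])
  obtain C where
    "\<And>F. finite F \<Longrightarrow> F \<subseteq> E \<Longrightarrow> (\<Sum>e\<in>F. lam e powr (-\<beta>) * (inner \<theta> e)\<^sup>2) \<le> C"
  proof (cases "\<beta> \<le> 0")
    case True
    have "0 < lam e \<and> lam e \<le> 1" if "e \<in> E" for e
      using assms(6)[OF that] by simp
    from that[OF weighted_coefficient_sum_le_norm[OF orth True this]] show thesis .
  next
    case False
    then have "0 < \<beta>" by simp
    have summable: "summable (\<lambda>n. real n powr (\<beta> - 1) * (norm ((T ^^ n) \<theta>))\<^sup>2)"
      by (rule summable_powr_weighted_of_decay[OF assms(9,10)]) (simp_all add: T_def assms(11))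
    have rate: "0 < lam e \<and> \<gamma> * lam e \<le> 1/2" if "e \<in> E" for e
      using assms(6)[OF that] assms(7,8) mult_strict_mono[of \<gamma> 1 "lam e" "1/2"] by auto
    show thesis
      using weighted_coefficient_sum_bounded[OF orth \<open>0 < \<beta>\<close> assms(7) rate coeff summable] that
      by blast
  qed
  then show ?thesis
    unfolding beta_norm_sq_def by (rule infsum_ennreal_less_top_if_bounded[rotated]) auto
qed

end
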